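(* Let $\alpha\ge0$, $\mu\ge0$. There is a positive constant $M$ such that for all $g\in C_B[0,\infty)$, $n\in\mathbb{N}$ and $x\in[0,\infty)$, $$|T_n(g;x)-g(x)|\le M\,\omega_2\!\left(g;\frac12\sqrt{\frac{1}{n^2}x\left(8x^3\alpha^2+4x\alpha+n\right)+\frac{2\mu x}{n}\frac{e_\mu(-nx)}{e_\mu(nx)}}\right)+\omega\!\left(g;\frac{2\alpha x^2}{n}\right).$$
   Context: $C_B[0,\infty)$ denotes the space of uniformly continuous bounded functions on $[0,\infty)$ with sup norm. $\omega(g;\delta)=\sup\{|g(s)-g(t)|: s,t\ge0,\ |s-t|\le\delta\}$ and $\omega_2(f;\delta)=\sup_{0<s\le\delta}\|f(\cdot+2s)-2f(\cdot+s)+f(\cdot)\|_{C_B[0,\infty)}$. For $\mu>-\tfrac12$ define $\gamma_\mu(2k)=\dfrac{2^{2k}k!\,\Gamma(k+\mu+1/2)}{\Gamma(\mu+1/2)}$ and $\gamma_\mu(2k+1)=\dfrac{2^{2k+1}k!\,\Gamma(k+\mu+3/2)}{\Gamma(\mu+1/2)}$, $k\ge0$; $e_\mu(x)=\sum_{k\ge0} x^k/\gamma_\mu(k)$; $\theta_k=0$ if $k$ is even and $\theta_k=1$ if $k$ is odd. Let $h_k^\mu(\xi,\alpha)=\gamma_\mu(k)\sum_{j=0}^{\lfloor k/2\rfloor}\dfrac{\alpha^j\xi^{k-2j}}{j!\,\gamma_\mu(k-2j)}$. For $\alpha\ge0,\mu\ge0$, $n\in\mathbb{N}$ and $x\in[0,\infty)$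 define $$T_n(f;x)=\frac{1}{e^{\alpha x^2}e_\mu(nx)}\sum_{k=0}^\infty \frac{h_k^\mu(n,\alpha)}{\gamma_\mu(k)}x^k f\!\left(\frac{k+2\mu\theta_k}{n}\right).$$ *)

theory Defs
  imports "HOL-Analysis.Analysis"
begin

definition gamma_mu :: "real \<Rightarrow> nat \<Rightarrow> real" where
  "gamma_mu \<mu> k =
     (if even k then
        2 ^ k * fact (k div 2) * Gamma (real (k div 2) + \<mu> + 1/2) / Gamma (\<mu> + 1/2)
      else
        2 ^ k * fact (k div 2) * Gamma (real (k div 2) + \<mu> + 3/2) / Gamma (\<mu> + 1/2))"

definition e_mu :: "real \<Rightarrow> real \<Rightarrow> real" where
  "e_mu \<mu> x = (\<Sum>k. x ^ k / gamma_mu \<mu> k)"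

definition theta :: "nat \<Rightarrow> real" where
  "theta k = (if even k then 0 else 1)"

definition h_mu :: "real \<Rightarrow> nat \<Rightarrow> real \<Rightarrow> real \<Rightarrow> real" where
  "h_mu \<mu> k \<xi> \<alpha> =
     gamma_mu \<mu> k * (\<Sum>j = 0..k div 2. \<alpha> ^ j * \<xi> ^ (k - 2 * j) / (fact j * gamma_mu \<mu> (k - 2 * j)))"

definition T_op :: "real \<Rightarrow> real \<Rightarrow> nat \<Rightarrow> (real \<Rightarrow> real) \<Rightarrow> real \<Rightarrow> real" where
  "T_op \<alpha> \<mu> n f x =
     (1 / (exp (\<alpha> * x\<^sup>2) * e_mu \<mu> (real n * x))) *
     (\<Sum>k. h_mu \<mu> k (real n) \<alpha> / gamma_mu \<mu> k * x ^ k *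
            f ((real k + 2 * \<mu> * theta k) / real n))"

text \<open>C_B[0,oo): uniformly continuous bounded functions on [0,oo)
  (values outside [0,oo) are irrelevant).\<close>
definition CB :: "(real \<Rightarrow> real) set" where
  "CB = {g. uniformly_continuous_on {0..} g \<and> bounded (g ` {0..})}"

definition omega :: "(real \<Rightarrow> real) \<Rightarrow> real \<Rightarrow> real" where
  "omega g \<delta> = Sup {\<bar>g s - g t\<bar> | s t. s \<ge> 0 \<and> t \<ge> 0 \<and> \<bar>s - t\<bar> \<le> \<delta>}"

text \<open>Second order modulus of smoothness; the sup over an empty range
  (delta <= 0) is taken to be 0 (adding 0 does not change it otherwise,
  since all values are nonnegative).\<close>
definition omega2 :: "(real \<Rightarrow> real) \<Rightarrow> real \<Rightarrow> real" where
  "omega2 f \<delta> = Sup ({0} \<union>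
     {\<bar>f (y + 2 * s) - 2 * f (y + s) + f y\<bar> | s y. 0 < s \<and> s \<le> \<delta> \<and> y \<ge> 0})"

end

theory Submission
  imports Defs
begin

(*
  Write z = alpha x^2, y = n x and [k]_mu = k + 2 mu theta_k.  The weight of the node [k]_mu / n
  in T_n is a Cauchy product: the coefficients z^j / j! of exp z, placed at the even indices 2j,
  convolved with the coefficients y^m / gamma_mu(m) of e_mu(y); and [m + 2j]_mu = [m]_mu + 2j,
  so the node splits accordingly.  Since gamma_mu(k+1) = [k+1]_mu gamma_mu(k), the first two
  moments of both factors are explicit, so T_n reproduces constants, has mean
  u = x + 2 alpha x^2 / n and variance V about u with V <= S, the quantity under the square root.

  If all second differences of g with step at most delta are bounded by w, then g deviates from
  its secant through u and u + delta by at most (8 + 2 (t - u)^2 / delta^2) w at every t >= 0: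
  walk from u to t along a grid of mesh at most delta, and bound the first step by comparing g
  with its linear interpolant.  Integrating against the weights of T_n, with delta = sqrt S / 2,
  gives |T_n g x - g u| <= 16 omega2 g delta, and |g u - g x| <= omega g (2 alpha x^2 / n).
*)

definition bracket_mu :: "real \<Rightarrow> nat \<Rightarrow> real" where
  "bracket_mu \<mu> k = real k + 2 * \<mu> * theta k"

lemma bracket_mu_nonneg: "\<mu> \<ge> 0 \<Longrightarrow> bracket_mu \<mu> k \<ge> 0"
  by (simp add: bracket_mu_def theta_def)

lemma bracket_mu_0 [simp]: "bracket_mu \<mu> 0 = 0"
  by (simp add: bracket_mu_def theta_def)

lemma bracket_mu_Suc: "bracket_mu \<mu> (Suc k) = bracket_mu \<mu> k + 1 + 2 * \<mu> * (-1) ^ k"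
  by (cases "even k") (simp_all add: bracket_mu_def theta_def)

lemma bracket_mu_add_even: "even i \<Longrightarrow> bracket_mu \<mu> (k + i) = bracket_mu \<mu> k + real i"
  by (simp add: bracket_mu_def theta_def)

lemma gamma_mu_0: "\<mu> \<ge> 0 \<Longrightarrow> gamma_mu \<mu> 0 = 1"
  by (simp add: gamma_mu_def less_imp_neq[OF Gamma_real_pos, symmetric])

lemma gamma_mu_Suc:
  assumes "\<mu> \<ge> 0"
  shows "gamma_mu \<mu> (Suc k) = bracket_mu \<mu> (Suc k) * gamma_mu \<mu> k"
proof -
  have Gamma_step: "Gamma (real j + \<mu> + 3/2) = (real j + \<mu> + 1/2) * Gamma (real j + \<mu> + 1/2)" for j
  proof -
    have "real j + \<mu> + 1/2 \<notin> \<int>\<^sub>\<le>\<^sub>0"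
      using assms by (auto elim!: nonpos_Ints_cases)
    from Gamma_plus1[OF this] show ?thesis by (simp add: add_ac)
  qed
  show ?thesis
  proof (cases "even k")
    case True
    then obtain j where k: "k = 2 * j" by blast
    have "gamma_mu \<mu> (Suc k) = 2 * (real j + \<mu> + 1/2) * gamma_mu \<mu> k"
      by (simp add: gamma_mu_def k Gamma_step)
    then show ?thesis by (simp add: bracket_mu_def theta_def k algebra_simps)
  next
    case False
    then obtain j where k: "k = 2 * j + 1" by (metis oddE)
    then have "Suc k = 2 * (j + 1)" by simp
    then show ?thesis
      by (simp add: gamma_mu_def bracket_mu_def theta_def k add_ac field_simps)
  qed
qed

lemma gamma_mu_ge_fact: "\<mu> \<ge> 0 \<Longrightarrow> gamma_mu \<mu> k \<ge> fact k"
proof (induction k)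
  case 0
  then show ?case by (simp add: gamma_mu_0)
next
  case (Suc k)
  have "fact (Suc k) = real (Suc k) * fact k" by simp
  also have "\<dots> \<le> bracket_mu \<mu> (Suc k) * gamma_mu \<mu> k"
    using Suc by (intro mult_mono) (auto simp: bracket_mu_def theta_def)
  finally show ?case using gamma_mu_Suc[OF Suc.prems] by simp
qed

lemma gamma_mu_pos: "\<mu> \<ge> 0 \<Longrightarrow> gamma_mu \<mu> k > 0"
  using gamma_mu_ge_fact[of \<mu> k] fact_gt_zero[where 'a=real, of k] by linarith

lemma gamma_mu_0_eq_fact: "gamma_mu 0 k = fact k"
  by (induction k) (simp_all add: gamma_mu_0 gamma_mu_Suc bracket_mu_def)

lemma e_mu_sums:
  assumes "\<mu> \<ge> 0"
  shows "(\<lambda>k. y ^ k / gamma_mu \<mu> k) sums e_mu \<mu> y"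
proof -
  have "summable (\<lambda>k. \<bar>y ^ k / gamma_mu \<mu> k\<bar>)"
  proof (rule summable_comparison_test[OF _ summable_exp[of "\<bar>y\<bar>"]])
    have "\<bar>y ^ k / gamma_mu \<mu> k\<bar> \<le> inverse (fact k) * \<bar>y\<bar> ^ k" for k
    proof -
      have "\<bar>y ^ k / gamma_mu \<mu> k\<bar> = \<bar>y\<bar> ^ k / gamma_mu \<mu> k"
        using gamma_mu_pos[OF assms, of k] by (simp add: abs_divide power_abs)
      also have "\<dots> \<le> \<bar>y\<bar> ^ k / fact k"
        using gamma_mu_ge_fact[OF assms, of k] gamma_mu_pos[OF assms, of k]
        by (intro divide_left_mono mult_pos_pos) simp_all
      finally show ?thesis by (simp add: divide_inverse mult.commute)
    qed
    then show "\<exists>N. \<forall>k\<ge>N. norm \<bar>y ^ k / gamma_mu \<mu> k\<bar> \<le> inverse (fact k) * \<bar>y\<bar> ^ k"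
      by simp
  qed
  then show ?thesis
    unfolding e_mu_def by (rule summable_sums[OF summable_rabs_cancel])
qed

lemma e_mu_0_eq_exp: "e_mu 0 y = exp y"
  using e_mu_sums[of 0 y] exp_converges[of y]
  by (simp add: gamma_mu_0_eq_fact divide_inverse mult.commute sums_unique2)

lemma e_mu_pos:
  assumes "\<mu> \<ge> 0" and "y \<ge> 0"
  shows "e_mu \<mu> y > 0"
proof -
  have "(\<Sum>k\<in>{0}. y ^ k / gamma_mu \<mu> k) \<le> e_mu \<mu> y"
    using assms gamma_mu_pos[OF assms(1)]
    by (intro sum_le_suminf[OF sums_summable[OF e_mu_sums], folded e_mu_def])
      (auto intro: divide_nonneg_pos)
  then show ?thesis by (simp add: gamma_mu_0 assms)
qed

lemma bracket_mu_Suc_mult_term: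
  assumes "\<mu> \<ge> 0"
  shows "bracket_mu \<mu> (Suc k) * (y ^ Suc k / gamma_mu \<mu> (Suc k)) = y * (y ^ k / gamma_mu \<mu> k)"
proof -
  have "bracket_mu \<mu> (Suc k) > 0"
    using assms by (simp add: bracket_mu_def theta_def add_pos_nonneg)
  then show ?thesis
    using gamma_mu_Suc[OF assms, of k] gamma_mu_pos[OF assms, of k] by simp
qed

lemma bracket_mu_e_mu_sums:
  assumes "\<mu> \<ge> 0"
  shows "(\<lambda>k. bracket_mu \<mu> k * (y ^ k / gamma_mu \<mu> k)) sums (y * e_mu \<mu> y)"
proof -
  have "(\<lambda>k. bracket_mu \<mu> (Suc k) * (y ^ Suc k / gamma_mu \<mu> (Suc k))) sums (y * e_mu \<mu> y)"
    unfolding bracket_mu_Suc_mult_term[OF assms] by (intro sums_mult e_mu_sums assms)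
  from sums_Suc_iff[THEN iffD1, OF this] show ?thesis by simp
qed

lemma bracket_mu_sq_e_mu_sums:
  assumes "\<mu> \<ge> 0"
  shows "(\<lambda>k. (bracket_mu \<mu> k)\<^sup>2 * (y ^ k / gamma_mu \<mu> k))
           sums (y * (y * e_mu \<mu> y + e_mu \<mu> y + 2 * \<mu> * e_mu \<mu> (- y)))"
proof -
  have "(bracket_mu \<mu> (Suc k))\<^sup>2 * (y ^ Suc k / gamma_mu \<mu> (Suc k))
      = y * (bracket_mu \<mu> k * (y ^ k / gamma_mu \<mu> k) + y ^ k / gamma_mu \<mu> k
             + 2 * \<mu> * ((- y) ^ k / gamma_mu \<mu> k))" for k
  proof -
    have "(bracket_mu \<mu> (Suc k))\<^sup>2 * (y ^ Suc k / gamma_mu \<mu> (Suc k))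
        = y * bracket_mu \<mu> (Suc k) * (y ^ k / gamma_mu \<mu> k)"
      by (simp only: power2_eq_square mult.assoc bracket_mu_Suc_mult_term[OF assms])
        (simp add: ac_simps)
    then show ?thesis
      unfolding bracket_mu_Suc power_minus[of y k] by (simp add: algebra_simps add_divide_distrib)
  qed
  moreover have "(\<lambda>k. y * (bracket_mu \<mu> k * (y ^ k / gamma_mu \<mu> k) + y ^ k / gamma_mu \<mu> k
             + 2 * \<mu> * ((- y) ^ k / gamma_mu \<mu> k)))
      sums (y * (y * e_mu \<mu> y + e_mu \<mu> y + 2 * \<mu> * e_mu \<mu> (- y)))"
    by (intro sums_mult sums_add bracket_mu_e_mu_sums e_mu_sums assms)
  ultimately have "(\<lambda>k. (bracket_mu \<mu> (Suc k))\<^sup>2 * (y ^ Suc k / gamma_mu \<mu> (Suc k)))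
      sums (y * (y * e_mu \<mu> y + e_mu \<mu> y + 2 * \<mu> * e_mu \<mu> (- y)))"
    by simp
  from sums_Suc_iff[THEN iffD1, OF this] show ?thesis by simp
qed

lemma exp_first_moment_sums: "(\<lambda>k. real k * (z ^ k / fact k)) sums (z * exp (z::real))"
  using bracket_mu_e_mu_sums[of 0 z]
  by (simp add: bracket_mu_def gamma_mu_0_eq_fact e_mu_0_eq_exp)

lemma exp_second_moment_sums:
  "(\<lambda>k. (real k)\<^sup>2 * (z ^ k / fact k)) sums (z * (z + 1) * exp (z::real))"
  using bracket_mu_sq_e_mu_sums[of 0 z]
  by (simp add: bracket_mu_def gamma_mu_0_eq_fact e_mu_0_eq_exp algebra_simps)

definition even_spread :: "(nat \<Rightarrow> 'a::zero) \<Rightarrow> nat \<Rightarrow> 'a" where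
  "even_spread f i = (if even i then f (i div 2) else 0)"

lemma sums_even_spread:
  assumes "f sums s"
  shows "even_spread f sums s"
proof -
  have "(\<lambda>j. even_spread f (2 * j)) sums s \<longleftrightarrow> even_spread f sums s"
    by (rule sums_mono_reindex) (auto simp: strict_mono_def even_spread_def elim!: evenE)
  then show ?thesis using assms by (simp add: even_spread_def)
qed

lemma sum_atMost_even_spread:
  fixes f G :: "nat \<Rightarrow> 'a::semiring_0"
  shows "(\<Sum>i\<le>k. even_spread f i * G i) = (\<Sum>j = 0..k div 2. f j * G (2 * j))"
proof -
  have "(\<Sum>j = 0..k div 2. f j * G (2 * j)) = (\<Sum>i\<in>(\<lambda>j. 2 * j) ` {0..k div 2}. even_spread f i * G i)"
    by (subst sum.reindex) (auto simp: inj_on_def even_spread_def)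
  also have "\<dots> = (\<Sum>i\<le>k. even_spread f i * G i)"
    by (rule sum.mono_neutral_left) (auto simp: even_spread_def elim!: evenE)
  finally show ?thesis by simp
qed

lemma even_spread_exp_moments_sums:
  fixes z :: real
  defines "a \<equiv> even_spread (\<lambda>j. z ^ j / fact j)"
  shows "a sums exp z"
    and "(\<lambda>i. real i * a i) sums (2 * (z * exp z))"
    and "(\<lambda>i. (real i)\<^sup>2 * a i) sums (4 * (z * (z + 1) * exp z))"
proof -
  show "a sums exp z"
    unfolding a_def using exp_converges[of z]
    by (intro sums_even_spread) (simp add: divide_inverse mult.commute)
  have first: "(\<lambda>i. real i * a i) = even_spread (\<lambda>j. 2 * (real j * (z ^ j / fact j)))"
    by (rule ext) (auto simp: a_def even_spread_def elim!: evenE)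
  show "(\<lambda>i. real i * a i) sums (2 * (z * exp z))"
    unfolding first by (intro sums_even_spread sums_mult exp_first_moment_sums)
  have second: "(\<lambda>i. (real i)\<^sup>2 * a i) = even_spread (\<lambda>j. 4 * ((real j)\<^sup>2 * (z ^ j / fact j)))"
    by (rule ext) (auto simp: a_def even_spread_def power2_eq_square elim!: evenE)
  show "(\<lambda>i. (real i)\<^sup>2 * a i) sums (4 * (z * (z + 1) * exp z))"
    unfolding second by (intro sums_even_spread sums_mult exp_second_moment_sums)
qed

lemma Cauchy_product_sums_nonneg:
  fixes a b :: "nat \<Rightarrow> real"
  assumes "a sums A" "b sums B" "\<And>i. a i \<ge> 0" "\<And>i. b i \<ge> 0"
  shows "(\<lambda>k. \<Sum>i\<le>k. a i * b (k - i)) sums (A * B)"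
  using Cauchy_product_sums[of a b] assms
  by (simp add: sums_summable[OF assms(1)] sums_summable[OF assms(2)] sums_unique[symmetric])

lemma Cauchy_product_moments_sums:
  fixes a b p :: "nat \<Rightarrow> real"
  assumes nonneg: "\<And>i. a i \<ge> 0" "\<And>m. b m \<ge> 0" "\<And>m. p m \<ge> 0"
    and a: "a sums A0" "(\<lambda>i. real i * a i) sums A1" "(\<lambda>i. (real i)\<^sup>2 * a i) sums A2"
    and b: "b sums B0" "(\<lambda>m. p m * b m) sums B1" "(\<lambda>m. (p m)\<^sup>2 * b m) sums B2"
  shows "(\<lambda>k. \<Sum>i\<le>k. a i * b (k - i)) sums (A0 * B0)"
    and "(\<lambda>k. \<Sum>i\<le>k. a i * b (k - i) * (p (k - i) + real i)) sums (A0 * B1 + A1 * B0)"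
    and "(\<lambda>k. \<Sum>i\<le>k. a i * b (k - i) * (p (k - i) + real i)\<^sup>2)
           sums (A0 * B2 + 2 * (A1 * B1) + A2 * B0)"
proof -
  note conv = Cauchy_product_sums_nonneg
  show "(\<lambda>k. \<Sum>i\<le>k. a i * b (k - i)) sums (A0 * B0)"
    by (rule conv[OF a(1) b(1) nonneg(1,2)])
  have "(\<lambda>k. (\<Sum>i\<le>k. a i * (p (k - i) * b (k - i))) + (\<Sum>i\<le>k. (real i * a i) * b (k - i)))
      sums (A0 * B1 + A1 * B0)"
    by (intro sums_add conv a b) (simp_all add: nonneg)
  then show "(\<lambda>k. \<Sum>i\<le>k. a i * b (k - i) * (p (k - i) + real i)) sums (A0 * B1 + A1 * B0)"
    by (simp add: sum.distrib[symmetric] algebra_simps)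
  have "(\<lambda>k. (\<Sum>i\<le>k. a i * ((p (k - i))\<^sup>2 * b (k - i)))
        + 2 * (\<Sum>i\<le>k. (real i * a i) * (p (k - i) * b (k - i)))
        + (\<Sum>i\<le>k. ((real i)\<^sup>2 * a i) * b (k - i)))
      sums (A0 * B2 + 2 * (A1 * B1) + A2 * B0)"
    by (intro sums_add sums_mult conv a b) (simp_all add: nonneg)
  then show "(\<lambda>k. \<Sum>i\<le>k. a i * b (k - i) * (p (k - i) + real i)\<^sup>2)
      sums (A0 * B2 + 2 * (A1 * B1) + A2 * B0)"
    by (simp add: sum.distrib[symmetric] sum_distrib_left power2_eq_square algebra_simps)
qed

definition T_weight :: "real \<Rightarrow> real \<Rightarrow> nat \<Rightarrow> real \<Rightarrow> nat \<Rightarrow> real" where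
  "T_weight \<alpha> \<mu> n x k = h_mu \<mu> k (real n) \<alpha> / gamma_mu \<mu> k * x ^ k"

definition T_node :: "real \<Rightarrow> nat \<Rightarrow> nat \<Rightarrow> real" where
  "T_node \<mu> n k = bracket_mu \<mu> k / real n"

lemma T_weight_nonneg:
  assumes "\<mu> \<ge> 0" "\<alpha> \<ge> 0" "x \<ge> 0"
  shows "T_weight \<alpha> \<mu> n x k \<ge> 0"
  using assms gamma_mu_pos[OF assms(1)]
  by (auto simp: T_weight_def h_mu_def intro!: sum_nonneg mult_nonneg_nonneg divide_nonneg_pos)

lemma T_op_eq:
  "T_op \<alpha> \<mu> n f x =
     (\<Sum>k. T_weight \<alpha> \<mu> n x k * f (T_node \<mu> n k)) / (exp (\<alpha> * x\<^sup>2) * e_mu \<mu> (real n * x))"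
  by (simp add: T_op_def T_weight_def T_node_def bracket_mu_def)

lemma T_weight_mult_eq_convolution:
  assumes "\<mu> \<ge> 0"
  shows "T_weight \<alpha> \<mu> n x k * W (bracket_mu \<mu> k) =
    (\<Sum>i\<le>k. even_spread (\<lambda>j. (\<alpha> * x\<^sup>2) ^ j / fact j) i *
       ((real n * x) ^ (k - i) / gamma_mu \<mu> (k - i) * W (bracket_mu \<mu> (k - i) + real i)))"
proof -
  have "T_weight \<alpha> \<mu> n x k * W (bracket_mu \<mu> k) =
    (\<Sum>j = 0..k div 2. \<alpha> ^ j * real n ^ (k - 2 * j) / (fact j * gamma_mu \<mu> (k - 2 * j))
       * x ^ k * W (bracket_mu \<mu> k))"
    using gamma_mu_pos[OF assms, of k]
    by (simp add: T_weight_def h_mu_def sum_distrib_right)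
  also have "\<dots> = (\<Sum>j = 0..k div 2. (\<alpha> * x\<^sup>2) ^ j / fact j *
       ((real n * x) ^ (k - 2 * j) / gamma_mu \<mu> (k - 2 * j)
        * W (bracket_mu \<mu> (k - 2 * j) + real (2 * j))))"
  proof (rule sum.cong[OF refl])
    fix j assume "j \<in> {0..k div 2}"
    then have "k = (k - 2 * j) + 2 * j" by auto
    then have "x ^ k = x ^ (2 * j) * x ^ (k - 2 * j)" and
      "bracket_mu \<mu> k = bracket_mu \<mu> (k - 2 * j) + real (2 * j)"
      by (metis add.commute power_add, metis bracket_mu_add_even even_mult_iff even_numeral)
    then show "\<alpha> ^ j * real n ^ (k - 2 * j) / (fact j * gamma_mu \<mu> (k - 2 * j)) * x ^ k
        * W (bracket_mu \<mu> k) = (\<alpha> * x\<^sup>2) ^ j / fact j *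
       ((real n * x) ^ (k - 2 * j) / gamma_mu \<mu> (k - 2 * j)
        * W (bracket_mu \<mu> (k - 2 * j) + real (2 * j)))"
      by (simp add: power_mult_distrib power_mult)
  qed
  also have "\<dots> = (\<Sum>i\<le>k. even_spread (\<lambda>j. (\<alpha> * x\<^sup>2) ^ j / fact j) i *
       ((real n * x) ^ (k - i) / gamma_mu \<mu> (k - i) * W (bracket_mu \<mu> (k - i) + real i)))"
    by (rule sum_atMost_even_spread[symmetric])
  finally show ?thesis .
qed

lemma T_weight_moments_sums:
  fixes \<alpha> \<mu> x :: real and n :: nat
  assumes "\<mu> \<ge> 0" "\<alpha> \<ge> 0" "x \<ge> 0"
  defines "z \<equiv> \<alpha> * x\<^sup>2" and "y \<equiv> real n * x"
  shows "T_weight \<alpha> \<mu> n x sums (exp z * e_mu \<mu> y)"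
    and "(\<lambda>k. T_weight \<alpha> \<mu> n x k * bracket_mu \<mu> k) sums (exp z * e_mu \<mu> y * (y + 2 * z))"
    and "(\<lambda>k. T_weight \<alpha> \<mu> n x k * (bracket_mu \<mu> k)\<^sup>2)
           sums (exp z * e_mu \<mu> y * ((y + 2 * z)\<^sup>2 + y + 4 * z) + 2 * \<mu> * y * exp z * e_mu \<mu> (- y))"
proof -
  define a where "a = even_spread (\<lambda>j. z ^ j / fact j)"
  define b where "b m = y ^ m / gamma_mu \<mu> m" for m
  have conv: "T_weight \<alpha> \<mu> n x k * W (bracket_mu \<mu> k) =
      (\<Sum>i\<le>k. a i * b (k - i) * W (bracket_mu \<mu> (k - i) + real i))" for k W
    unfolding T_weight_mult_eq_convolution[OF assms(1)] a_def b_def z_def y_def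
    by (simp add: mult.assoc)
  have "z \<ge> 0" "y \<ge> 0" using assms by (simp_all add: z_def y_def)
  then have "a i \<ge> 0" "b m \<ge> 0" for i m
    using gamma_mu_pos[OF assms(1), of m]
    by (simp_all add: a_def b_def even_spread_def divide_nonneg_pos)
  note moments = Cauchy_product_moments_sums[of a b "bracket_mu \<mu>", OF this
      bracket_mu_nonneg[OF assms(1)] even_spread_exp_moments_sums[of z, folded a_def]
      e_mu_sums[OF assms(1), of y, folded b_def]
      bracket_mu_e_mu_sums[OF assms(1), of y, folded b_def]
      bracket_mu_sq_e_mu_sums[OF assms(1), of y, folded b_def]]
  have "T_weight \<alpha> \<mu> n x = (\<lambda>k. \<Sum>i\<le>k. a i * b (k - i))"
    using conv[where W = "\<lambda>_. 1"] by (simp add: fun_eq_iff)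
  with moments(1) show "T_weight \<alpha> \<mu> n x sums (exp z * e_mu \<mu> y)" by simp
  show "(\<lambda>k. T_weight \<alpha> \<mu> n x k * bracket_mu \<mu> k) sums (exp z * e_mu \<mu> y * (y + 2 * z))"
    using moments(2) conv[where W = "\<lambda>t. t"] by (simp add: algebra_simps)
  show "(\<lambda>k. T_weight \<alpha> \<mu> n x k * (bracket_mu \<mu> k)\<^sup>2)
      sums (exp z * e_mu \<mu> y * ((y + 2 * z)\<^sup>2 + y + 4 * z) + 2 * \<mu> * y * exp z * e_mu \<mu> (- y))"
    using moments(3) conv[where W = "\<lambda>t. t\<^sup>2"] by (simp add: algebra_simps power2_eq_square)
qed

lemma T_node_moments_sums:
  fixes \<alpha> \<mu> x :: real and n :: nat
  assumes "\<mu> \<ge> 0" "\<alpha> \<ge> 0" "x \<ge> 0" "n \<ge> 1"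
  defines "Z \<equiv> exp (\<alpha> * x\<^sup>2) * e_mu \<mu> (real n * x)"
    and "u \<equiv> x + 2 * \<alpha> * x\<^sup>2 / real n"
    and "V \<equiv> x / real n + 4 * \<alpha> * x\<^sup>2 / (real n)\<^sup>2
               + 2 * \<mu> * x / real n * (e_mu \<mu> (- real n * x) / e_mu \<mu> (real n * x))"
  shows "T_weight \<alpha> \<mu> n x sums Z"
    and "(\<lambda>k. T_weight \<alpha> \<mu> n x k * T_node \<mu> n k) sums (Z * u)"
    and "(\<lambda>k. T_weight \<alpha> \<mu> n x k * (T_node \<mu> n k - u)\<^sup>2) sums (Z * V)"
proof -
  define q where "q = T_weight \<alpha> \<mu> n x"
  define t where "t = T_node \<mu> n"
  have n: "real n > 0" using assms(4) by simp
  have e: "e_mu \<mu> (real n * x) > 0" using e_mu_pos assms by simp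
  note raw = T_weight_moments_sums[OF assms(1-3), of n, folded q_def Z_def]
  show q0: "q sums Z" by (rule raw(1))
  have "(\<lambda>k. q k * t k) = (\<lambda>k. q k * bracket_mu \<mu> k / real n)"
    "(\<lambda>k. q k * (t k)\<^sup>2) = (\<lambda>k. q k * (bracket_mu \<mu> k)\<^sup>2 / (real n)\<^sup>2)"
    by (simp_all add: t_def T_node_def power_divide)
  moreover have "Z * (real n * x + 2 * (\<alpha> * x\<^sup>2)) / real n = Z * u"
    using n by (simp add: u_def field_simps)
  moreover have "(Z * ((real n * x + 2 * (\<alpha> * x\<^sup>2))\<^sup>2 + real n * x + 4 * (\<alpha> * x\<^sup>2))
      + 2 * \<mu> * (real n * x) * exp (\<alpha> * x\<^sup>2) * e_mu \<mu> (- (real n * x))) / (real n)\<^sup>2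
      = Z * (V + u\<^sup>2)"
    using n e by (simp add: Z_def u_def V_def field_simps power2_eq_square)
  ultimately have q1: "(\<lambda>k. q k * t k) sums (Z * u)"
    and q2: "(\<lambda>k. q k * (t k)\<^sup>2) sums (Z * (V + u\<^sup>2))"
    using sums_divide[OF raw(2), of "real n"] sums_divide[OF raw(3), of "(real n)\<^sup>2"] by simp_all
  show "(\<lambda>k. q k * t k) sums (Z * u)" by (rule q1)
  have "(\<lambda>k. q k * (t k)\<^sup>2 - 2 * u * (q k * t k) + u\<^sup>2 * q k)
      sums (Z * (V + u\<^sup>2) - 2 * u * (Z * u) + u\<^sup>2 * Z)"
    by (intro sums_add sums_diff sums_mult q0 q1 q2)
  then show "(\<lambda>k. q k * (t k - u)\<^sup>2) sums (Z * V)"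
    by (simp add: power2_eq_square algebra_simps)
qed

lemma abs_le_of_second_differences_vanishing_ends:
  fixes \<phi> :: "real \<Rightarrow> real"
  assumes l: "l > 0" and ends: "\<phi> c = 0" "\<phi> (c + l) = 0"
    and bdd: "bounded (\<phi> ` {c..c + l})"
    and D: "\<And>y s. c \<le> y \<Longrightarrow> 0 < s \<Longrightarrow> y + 2 * s \<le> c + l \<Longrightarrow>
              \<bar>\<phi> (y + 2 * s) - 2 * \<phi> (y + s) + \<phi> y\<bar> \<le> w"
    and p: "c \<le> p" "p \<le> c + l"
  shows "\<bar>\<phi> p\<bar> \<le> w"
proof -
  define M where "M = (SUP t\<in>{c..c + l}. \<bar>\<phi> t\<bar>)"
  have bdd_abs: "bdd_above ((\<lambda>t. \<bar>\<phi> t\<bar>) ` {c..c + l})"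
    using bdd by (auto simp: bounded_iff bdd_above_def)
  have le_M: "\<bar>\<phi> t\<bar> \<le> M" if "c \<le> t" "t \<le> c + l" for t
    unfolding M_def using that by (intro cSUP_upper bdd_abs) auto
  have "w \<ge> 0"
    using D[of c "l / 2"] l by (smt (verit) field_sum_of_halves)
  moreover have "M \<ge> 0" using le_M[of c] l by simp
  \<comment> \<open>each inner point is the midpoint of an endpoint and another point of the interval\<close>
  ultimately have halve: "\<bar>\<phi> t\<bar> \<le> (M + w) / 2" if "c \<le> t" "t \<le> c + l" for t
  proof (cases "t = c \<or> t = c + l")
    case False
    define s where "s = min (t - c) (c + l - t)"
    have "0 < s" "c \<le> t - s" "t + s \<le> c + l" using that False by (auto simp: s_def)
    from D[OF this(2,1)] this have "\<bar>\<phi> (t + s) - 2 * \<phi> t + \<phi> (t - s)\<bar> \<le> w"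
      by (simp add: algebra_simps)
    moreover have "\<phi> (t - s) = 0 \<or> \<phi> (t + s) = 0"
      using ends by (auto simp: s_def min_def)
    moreover have "\<bar>\<phi> (t - s)\<bar> \<le> M" "\<bar>\<phi> (t + s)\<bar> \<le> M"
      using \<open>0 < s\<close> \<open>c \<le> t - s\<close> \<open>t + s \<le> c + l\<close> by (intro le_M; linarith)+
    ultimately show ?thesis by (auto simp: abs_le_iff)
  qed (use ends \<open>w \<ge> 0\<close> \<open>M \<ge> 0\<close> in auto)
  have "M \<le> (M + w) / 2"
    using cSUP_least[of "{c..c + l}" "\<lambda>t. \<bar>\<phi> t\<bar>" "(M + w) / 2"] l halve
    by (simp add: M_def[symmetric])
  then show ?thesis using le_M[OF p] by simp
qed

lemma linear_interpolation_error_le: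
  fixes f :: "real \<Rightarrow> real"
  assumes l: "l > 0" and bdd: "bounded (f ` {c..c + l})"
    and D: "\<And>y s. c \<le> y \<Longrightarrow> 0 < s \<Longrightarrow> y + 2 * s \<le> c + l \<Longrightarrow>
              \<bar>f (y + 2 * s) - 2 * f (y + s) + f y\<bar> \<le> w"
    and p: "c \<le> p" "p \<le> c + l"
  shows "\<bar>f p - ((c + l - p) * f c + (p - c) * f (c + l)) / l\<bar> \<le> w"
proof -
  define \<phi> where "\<phi> t = f t - ((c + l - t) * f c + (t - c) * f (c + l)) / l" for t
  have "bounded ((\<lambda>t. ((c + l - t) * f c + (t - c) * f (c + l)) / l) ` {c..c + l})"
    using l by (intro compact_imp_bounded compact_continuous_image continuous_intros) auto
  then have bdd_\<phi>: "bounded (\<phi> ` {c..c + l})"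
    unfolding \<phi>_def by (rule bounded_minus_comp[OF bdd])
  have "\<phi> (y + 2 * s) - 2 * \<phi> (y + s) + \<phi> y = f (y + 2 * s) - 2 * f (y + s) + f y" for y s
    using l by (simp add: \<phi>_def field_simps)
  with D have "\<bar>\<phi> (y + 2 * s) - 2 * \<phi> (y + s) + \<phi> y\<bar> \<le> w"
    if "c \<le> y" "0 < s" "y + 2 * s \<le> c + l" for y s
    using that by simp
  moreover have "\<phi> c = 0" "\<phi> (c + l) = 0" using l by (simp_all add: \<phi>_def)
  ultimately have "\<bar>\<phi> p\<bar> \<le> w"
    by (intro abs_le_of_second_differences_vanishing_ends[OF l _ _ bdd_\<phi> _ p])
  then show ?thesis by (simp add: \<phi>_def)
qed

lemma abs_le_of_second_differences_seq:
  fixes e :: "nat \<Rightarrow> real"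
  assumes w: "w \<ge> 0" and e0: "e 0 = 0" and e1: "\<bar>e 1\<bar> \<le> a"
    and D: "\<And>k. k + 2 \<le> m \<Longrightarrow> \<bar>e (k + 2) - 2 * e (k + 1) + e k\<bar> \<le> w"
  shows "\<bar>e m\<bar> \<le> real m * a + (real m)\<^sup>2 * w"
proof -
  have step: "\<bar>e (k + 1) - e k\<bar> \<le> a + real k * w" if "k + 1 \<le> m" for k
    using that
  proof (induction k)
    case (Suc k)
    then have "\<bar>e (k + 1) - e k\<bar> \<le> a + real k * w" "\<bar>e (k + 2) - 2 * e (k + 1) + e k\<bar> \<le> w"
      using D by simp_all
    then show ?case by (simp add: abs_le_iff algebra_simps)
  qed (use e0 e1 in auto)
  have "\<bar>e k\<bar> \<le> real k * a + (real k)\<^sup>2 * w" if "k \<le> m" for k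
    using that
  proof (induction k)
    case (Suc k)
    then have "\<bar>e k\<bar> \<le> real k * a + (real k)\<^sup>2 * w" "\<bar>e (k + 1) - e k\<bar> \<le> a + real k * w"
      using step by simp_all
    moreover have "real k * w \<le> (2 * real k + 1) * w"
      using w by (intro mult_right_mono) auto
    ultimately show ?case by (simp add: abs_le_iff power2_eq_square algebra_simps)
  qed (simp add: e0)
  then show ?thesis by simp
qed

lemma abs_le_near_zeros_of_second_differences:
  fixes \<phi> :: "real \<Rightarrow> real"
  assumes h: "h > 0" and zeros: "\<phi> u = 0" "\<phi> (u + h) = 0"
    and bdd: "\<And>a b. 0 \<le> a \<Longrightarrow> bounded (\<phi> ` {a..b})"
    and D: "\<And>y s. 0 \<le> y \<Longrightarrow> 0 < s \<Longrightarrow> s \<le> h \<Longrightarrow>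
              \<bar>\<phi> (y + 2 * s) - 2 * \<phi> (y + s) + \<phi> y\<bar> \<le> w"
    and u: "u \<ge> 0" and s: "\<bar>s\<bar> \<le> h" "u + s \<ge> 0"
  shows "\<bar>\<phi> (u + s)\<bar> \<le> 2 * w"
proof -
  have w: "w \<ge> 0" using D[of 0 h] h by fastforce
  consider "s = 0" | "s > 0" | "s < 0" by linarith
  then show ?thesis
  proof cases
    case 1
    then show ?thesis using zeros w by simp
  next
    case 2
    have "\<bar>\<phi> (y + 2 * s') - 2 * \<phi> (y + s') + \<phi> y\<bar> \<le> w"
      if "u \<le> y" "0 < s'" "y + 2 * s' \<le> u + h" for y s'
      using that u by (intro D) auto
    then have "\<bar>\<phi> (u + s)\<bar> \<le> w"
      using s 2 zeros bdd[OF u, of "u + h"]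
      by (intro abs_le_of_second_differences_vanishing_ends[of h \<phi> u]) (auto simp: h)
    then show ?thesis using w by simp
  next
    case 3
    have "\<bar>\<phi> (y + 2 * s') - 2 * \<phi> (y + s') + \<phi> y\<bar> \<le> w"
      if "u + s \<le> y" "0 < s'" "y + 2 * s' \<le> u + s + (h - s)" for y s'
      using that s 3 by (intro D) auto
    then have "\<bar>\<phi> u - ((u + s + (h - s) - u) * \<phi> (u + s) + (u - (u + s)) * \<phi> (u + s + (h - s))) / (h - s)\<bar> \<le> w"
      using s 3 bdd[of "u + s" "u + s + (h - s)"]
      by (intro linear_interpolation_error_le) auto
    then have "h * \<bar>\<phi> (u + s)\<bar> \<le> (h - s) * w"
      using zeros 3 h by (simp add: abs_mult pos_divide_le_eq mult.commute)
    also have "\<dots> \<le> (2 * h) * w"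
      using s 3 w by (intro mult_right_mono) auto
    finally show ?thesis using h by simp
  qed
qed

lemma abs_le_along_grid_of_second_differences:
  fixes \<phi> :: "real \<Rightarrow> real"
  assumes w: "w \<ge> 0"
    and D: "\<And>y s. 0 \<le> y \<Longrightarrow> 0 < s \<Longrightarrow> s \<le> h \<Longrightarrow>
              \<bar>\<phi> (y + 2 * s) - 2 * \<phi> (y + s) + \<phi> y\<bar> \<le> w"
    and s: "s \<noteq> 0" "\<bar>s\<bar> \<le> h" and u: "u \<ge> 0" "u + real m * s \<ge> 0"
    and zero: "\<phi> u = 0" and first: "\<bar>\<phi> (u + s)\<bar> \<le> a"
  shows "\<bar>\<phi> (u + real m * s)\<bar> \<le> real m * a + (real m)\<^sup>2 * w"
proof -
  have grid_nonneg: "u + real k * s \<ge> 0" if "k \<le> m" for k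
  proof (cases "s \<ge> 0")
    case False
    then have "real m * s \<le> real k * s" using that by (simp add: mult_right_mono_neg)
    then show ?thesis using u by linarith
  qed (use u in simp)
  define e where "e k = \<phi> (u + real k * s)" for k
  have "\<bar>e m\<bar> \<le> real m * a + (real m)\<^sup>2 * w"
  proof (rule abs_le_of_second_differences_seq[OF w])
    show "e 0 = 0" "\<bar>e 1\<bar> \<le> a" using zero first by (simp_all add: e_def)
    fix k assume "k + 2 \<le> m"
    then have ends: "u + real k * s \<ge> 0" "u + real (k + 2) * s \<ge> 0"
      using grid_nonneg[of k] grid_nonneg[of "k + 2"] by simp_all
    show "\<bar>e (k + 2) - 2 * e (k + 1) + e k\<bar> \<le> w"
    proof (cases "s > 0")
      case True
      with s have "0 < s" "s \<le> h" by auto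
      from D[OF ends(1) this] show ?thesis by (simp add: e_def algebra_simps)
    next
      case False
      with s have "0 < - s" "- s \<le> h" by auto
      from D[OF ends(2) this] show ?thesis by (simp add: e_def algebra_simps)
    qed
  qed
  then show ?thesis by (simp add: e_def)
qed

lemma abs_le_of_second_differences_vanishing_at:
  fixes \<phi> :: "real \<Rightarrow> real"
  assumes h: "h > 0" and u: "u \<ge> 0" and zeros: "\<phi> u = 0" "\<phi> (u + h) = 0"
    and bdd: "\<And>a b. 0 \<le> a \<Longrightarrow> bounded (\<phi> ` {a..b})"
    and D: "\<And>y s. 0 \<le> y \<Longrightarrow> 0 < s \<Longrightarrow> s \<le> h \<Longrightarrow>
              \<bar>\<phi> (y + 2 * s) - 2 * \<phi> (y + s) + \<phi> y\<bar> \<le> w"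
    and t: "t \<ge> 0"
  shows "\<bar>\<phi> t\<bar> \<le> (8 + 2 * (t - u)\<^sup>2 / h\<^sup>2) * w"
proof -
  have w: "w \<ge> 0" using D[of 0 h] h by fastforce
  show ?thesis
  proof (cases "t = u")
    case False
    \<comment> \<open>then t = u + m s exactly, and all grid points lie between u and t\<close>
    define r where "r = \<bar>t - u\<bar> / h"
    define m where "m = nat \<lceil>r\<rceil>"
    define s where "s = (t - u) / real m"
    have "r > 0" using False h by (simp add: r_def)
    then have "real m = of_int \<lceil>r\<rceil>" by (simp add: m_def)
    then have m: "r \<le> real m" "real m < r + 1" using ceiling_correct[of r] by linarith+
    with \<open>r > 0\<close> have "m \<ge> 1" by simp
    then have t_eq: "t = u + real m * s" by (simp add: s_def)
    have s: "s \<noteq> 0" "\<bar>s\<bar> \<le> h"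
      using m \<open>m \<ge> 1\<close> h False by (auto simp: s_def r_def abs_divide field_simps)
    have "u + s \<ge> 0"
    proof (cases "s \<ge> 0")
      case False
      then have "real m * s \<le> s" using \<open>m \<ge> 1\<close> by (simp add: mult_le_cancel_right1)
      then show ?thesis using t t_eq by linarith
    qed (use u in simp)
    have "\<bar>\<phi> t\<bar> \<le> real m * (2 * w) + (real m)\<^sup>2 * w"
      unfolding t_eq
    proof (rule abs_le_along_grid_of_second_differences[OF w D s u _ zeros(1)])
      show "u + real m * s \<ge> 0" using t t_eq by simp
      show "\<bar>\<phi> (u + s)\<bar> \<le> 2 * w"
        by (rule abs_le_near_zeros_of_second_differences[OF h zeros bdd D u s(2) \<open>u + s \<ge> 0\<close>])
    qed
    also have "\<dots> = (real m * 2 + (real m)\<^sup>2) * w" by (simp add: algebra_simps)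
    also have "\<dots> \<le> (8 + 2 * r\<^sup>2) * w"
    proof (rule mult_right_mono[OF _ w])
      have "real m * 2 + (real m)\<^sup>2 \<le> (r + 1) * 2 + (r + 1)\<^sup>2"
        using m \<open>r > 0\<close> by (intro add_mono power_mono) auto
      also have "\<dots> \<le> 8 + 2 * r\<^sup>2"
        using zero_le_square[of "r - 2"] by (simp add: power2_eq_square algebra_simps)
      finally show "real m * 2 + (real m)\<^sup>2 \<le> 8 + 2 * r\<^sup>2" .
    qed
    finally show ?thesis by (simp add: r_def power_divide)
  qed (use zeros w in simp)
qed

lemma bdd_above_omega2_set:
  fixes g :: "real \<Rightarrow> real"
  assumes B: "\<And>t. t \<ge> 0 \<Longrightarrow> \<bar>g t\<bar> \<le> B"
  shows "bdd_above ({0} \<union> {\<bar>g (y + 2 * s) - 2 * g (y + s) + g y\<bar> | s y. 0 < s \<and> s \<le> \<delta> \<and> y \<ge> 0})"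
proof (rule bdd_aboveI[of _ "4 * B"])
  fix a
  assume "a \<in> {0} \<union> {\<bar>g (y + 2 * s) - 2 * g (y + s) + g y\<bar> | s y. 0 < s \<and> s \<le> \<delta> \<and> y \<ge> 0}"
  then consider "a = 0" | s y where "a = \<bar>g (y + 2 * s) - 2 * g (y + s) + g y\<bar>" "0 < s" "y \<ge> 0"
    by blast
  then show "a \<le> 4 * B"
  proof cases
    case 1
    then show ?thesis using B[of 0] by simp
  next
    case 2
    then have "\<bar>g (y + 2 * s)\<bar> \<le> B" "\<bar>g (y + s)\<bar> \<le> B" "\<bar>g y\<bar> \<le> B" by (simp_all add: B)
    with 2 show ?thesis by (simp add: abs_le_iff; linarith)
  qed
qed

lemma second_difference_le_omega2:
  fixes g :: "real \<Rightarrow> real"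
  assumes "\<And>t. t \<ge> 0 \<Longrightarrow> \<bar>g t\<bar> \<le> B" and "y \<ge> 0" "0 < s" "s \<le> \<delta>"
  shows "\<bar>g (y + 2 * s) - 2 * g (y + s) + g y\<bar> \<le> omega2 g \<delta>"
  unfolding omega2_def using assms by (intro cSup_upper bdd_above_omega2_set) blast+

lemma omega2_nonneg:
  fixes g :: "real \<Rightarrow> real"
  assumes "\<And>t. t \<ge> 0 \<Longrightarrow> \<bar>g t\<bar> \<le> B"
  shows "omega2 g \<delta> \<ge> 0"
  unfolding omega2_def using assms by (intro cSup_upper2[of 0] bdd_above_omega2_set) auto

lemma abs_diff_le_omega:
  fixes g :: "real \<Rightarrow> real"
  assumes B: "\<And>t. t \<ge> 0 \<Longrightarrow> \<bar>g t\<bar> \<le> B" and "s \<ge> 0" "t \<ge> 0" "\<bar>s - t\<bar> \<le> \<delta>"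
  shows "\<bar>g s - g t\<bar> \<le> omega g \<delta>"
  unfolding omega_def
proof (rule cSup_upper)
  show "\<bar>g s - g t\<bar> \<in> {\<bar>g s - g t\<bar> | s t. s \<ge> 0 \<and> t \<ge> 0 \<and> \<bar>s - t\<bar> \<le> \<delta>}"
    using assms by blast
  have "\<bar>g s' - g t'\<bar> \<le> 2 * B" if "s' \<ge> 0" "t' \<ge> 0" for s' t'
    using B[OF that(1)] B[OF that(2)] by (simp add: abs_le_iff; linarith)
  then show "bdd_above {\<bar>g s - g t\<bar> | s t. s \<ge> 0 \<and> t \<ge> 0 \<and> \<bar>s - t\<bar> \<le> \<delta>}"
    by (intro bdd_aboveI[of _ "2 * B"]) blast
qed

lemma affine_deviation_le_omega2:
  fixes g :: "real \<Rightarrow> real"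
  assumes B: "\<And>t. t \<ge> 0 \<Longrightarrow> \<bar>g t\<bar> \<le> B" and \<delta>: "\<delta> > 0" and u: "u \<ge> 0" and t: "t \<ge> 0"
  shows "\<bar>g t - g u - (g (u + \<delta>) - g u) / \<delta> * (t - u)\<bar> \<le> (8 + 2 * (t - u)\<^sup>2 / \<delta>\<^sup>2) * omega2 g \<delta>"
proof -
  define L where "L = (g (u + \<delta>) - g u) / \<delta>"
  define \<phi> where "\<phi> x = g x - (g u + L * (x - u))" for x
  have "bounded (\<phi> ` {a..b})" if "0 \<le> a" for a b
    unfolding \<phi>_def
  proof (rule bounded_minus_comp)
    show "bounded (g ` {a..b})" using B that by (auto simp: bounded_iff intro!: exI[of _ B])
    show "bounded ((\<lambda>x. g u + L * (x - u)) ` {a..b})"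
      by (intro compact_imp_bounded compact_continuous_image continuous_intros) auto
  qed
  moreover have "\<phi> (y + 2 * s) - 2 * \<phi> (y + s) + \<phi> y = g (y + 2 * s) - 2 * g (y + s) + g y" for y s
    by (simp add: \<phi>_def algebra_simps)
  then have "\<bar>\<phi> (y + 2 * s) - 2 * \<phi> (y + s) + \<phi> y\<bar> \<le> omega2 g \<delta>"
    if "0 \<le> y" "0 < s" "s \<le> \<delta>" for y s
    using second_difference_le_omega2[OF B that] by simp
  moreover have "\<phi> u = 0" "\<phi> (u + \<delta>) = 0" using \<delta> by (simp_all add: \<phi>_def L_def)
  ultimately have "\<bar>\<phi> t\<bar> \<le> (8 + 2 * (t - u)\<^sup>2 / \<delta>\<^sup>2) * omega2 g \<delta>"
    using \<delta> u t by (intro abs_le_of_second_differences_vanishing_at) auto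
  then show ?thesis by (simp add: \<phi>_def L_def algebra_simps)
qed

lemma weighted_sum_deviation_le_omega2:
  fixes q t :: "nat \<Rightarrow> real" and g :: "real \<Rightarrow> real"
  assumes q: "\<And>k. q k \<ge> 0" "q sums Z" and t: "\<And>k. t k \<ge> 0" and u: "u \<ge> 0"
    and G: "(\<lambda>k. q k * g (t k)) sums G" and mean: "(\<lambda>k. q k * t k) sums (Z * u)"
    and variance: "(\<lambda>k. q k * (t k - u)\<^sup>2) sums (Z * V)"
    and \<delta>: "\<delta> > 0" "V \<le> 4 * \<delta>\<^sup>2"
    and B: "\<And>t. t \<ge> 0 \<Longrightarrow> \<bar>g t\<bar> \<le> B"
  shows "\<bar>G - Z * g u\<bar> \<le> Z * (16 * omega2 g \<delta>)"
proof -
  define w where "w = omega2 g \<delta>"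
  define L where "L = (g (u + \<delta>) - g u) / \<delta>"
  have w: "w \<ge> 0" unfolding w_def by (rule omega2_nonneg[OF B])
  have "(\<lambda>k. q k * g (t k) - g u * q k - L * (q k * t k - u * q k))
      sums (G - g u * Z - L * (Z * u - u * Z))"
    by (intro sums_diff sums_mult G q(2) mean)
  then have dev: "(\<lambda>k. q k * (g (t k) - g u - L * (t k - u))) sums (G - Z * g u)"
    by (simp add: algebra_simps)
  have bound: "(\<lambda>k. q k * ((8 + 2 * (t k - u)\<^sup>2 / \<delta>\<^sup>2) * w))
      sums (Z * (8 * w + 2 * w * V / \<delta>\<^sup>2))"
    using sums_add[OF sums_mult[OF q(2), of "8 * w"] sums_mult[OF variance, of "2 * w / \<delta>\<^sup>2"]]
    by (simp add: algebra_simps)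
  have "\<bar>q k * (g (t k) - g u - L * (t k - u))\<bar> \<le> q k * ((8 + 2 * (t k - u)\<^sup>2 / \<delta>\<^sup>2) * w)" for k
    unfolding abs_mult abs_of_nonneg[OF q(1)] L_def w_def
    by (intro mult_left_mono affine_deviation_le_omega2[OF B \<delta>(1) u t] q(1))
  then have "\<bar>G - Z * g u\<bar> \<le> Z * (8 * w + 2 * w * V / \<delta>\<^sup>2)"
    using sums_le[OF _ dev bound] sums_le[OF _ sums_minus[OF dev] bound]
    by (auto simp: abs_le_iff)
  also have "\<dots> \<le> Z * (16 * w)"
  proof -
    have "Z \<ge> 0" using q by (simp add: sums_le[OF _ sums_zero q(2)])
    moreover have "2 * w * V / \<delta>\<^sup>2 \<le> 2 * w * (4 * \<delta>\<^sup>2) / \<delta>\<^sup>2"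
      using \<delta> w by (intro divide_right_mono mult_left_mono) auto
    ultimately show ?thesis using \<delta> by (intro mult_left_mono) auto
  qed
  finally show ?thesis unfolding w_def .
qed

lemma weighted_mean_deviation_le_omega2:
  fixes q t :: "nat \<Rightarrow> real" and g :: "real \<Rightarrow> real"
  assumes q: "\<And>k. q k \<ge> 0" "q sums Z" "Z > 0" and t: "\<And>k. t k \<ge> 0" and u: "u \<ge> 0"
    and mean: "(\<lambda>k. q k * t k) sums (Z * u)"
    and variance: "(\<lambda>k. q k * (t k - u)\<^sup>2) sums (Z * V)" and "V \<le> S"
    and B: "\<And>t. t \<ge> 0 \<Longrightarrow> \<bar>g t\<bar> \<le> B"
  shows "\<bar>(\<Sum>k. q k * g (t k)) / Z - g u\<bar> \<le> 16 * omega2 g (1/2 * sqrt S)"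
proof -
  define \<delta> where "\<delta> = 1/2 * sqrt S"
  have "0 \<le> Z * V" by (rule sums_le[OF _ sums_zero variance]) (simp add: q(1))
  then have "0 \<le> V" using q(3) by (simp add: zero_le_mult_iff)
  with \<open>V \<le> S\<close> have V: "V \<le> 4 * \<delta>\<^sup>2" by (simp add: \<delta>_def power_divide)
  have "summable (\<lambda>k. q k * g (t k))"
  proof (rule summable_comparison_test[OF _ summable_mult[OF sums_summable[OF q(2)], of B]])
    have "q k * \<bar>g (t k)\<bar> \<le> q k * B" for k using B[OF t] q(1) by (rule mult_left_mono)
    then show "\<exists>N. \<forall>k\<ge>N. norm (q k * g (t k)) \<le> B * q k"
      using q(1) by (auto simp: abs_mult mult.commute)
  qed
  then obtain G where G: "(\<lambda>k. q k * g (t k)) sums G" by (auto simp: summable_def)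
  have "\<bar>G - Z * g u\<bar> \<le> Z * (16 * omega2 g \<delta>)"
  proof (cases "\<delta> > 0")
    case True
    with V show ?thesis by (intro weighted_sum_deviation_le_omega2[OF q(1,2) t u G mean variance _ _ B])
  next
    case False
    then have "S \<le> 0" by (simp add: \<delta>_def)
    with \<open>V \<le> S\<close> \<open>0 \<le> V\<close> have "V = 0" by simp
    with variance have "(\<lambda>k. q k * (t k - u)\<^sup>2) sums 0" by simp
    then have "q k * (t k - u)\<^sup>2 = 0" for k
      using q(1) suminf_eq_zero_iff[of "\<lambda>k. q k * (t k - u)\<^sup>2"] by (simp add: sums_iff)
    then have "q k * g (t k) = g u * q k" for k by (cases "q k = 0") auto
    with G sums_mult[OF q(2), of "g u"] have "G = Z * g u" by (simp add: sums_unique2 mult.commute)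
    then show ?thesis using q(3) omega2_nonneg[OF B] by simp
  qed
  then show ?thesis
    using q(3) sums_unique[OF G] by (simp add: \<delta>_def abs_divide divide_le_eq field_simps)
qed

theorem theorem10:
  fixes \<alpha> \<mu> :: real
  assumes "\<alpha> \<ge> 0" and "\<mu> \<ge> 0"
  shows "\<exists>M>0. \<forall>g\<in>CB. \<forall>n::nat. n \<ge> 1 \<longrightarrow> (\<forall>x::real. x \<ge> 0 \<longrightarrow>
    \<bar>T_op \<alpha> \<mu> n g x - g x\<bar>
      \<le> M * omega2 g (1/2 * sqrt (1 / (real n)\<^sup>2 * x * (8 * x ^ 3 * \<alpha>\<^sup>2 + 4 * x * \<alpha> + real n)
                 + 2 * \<mu> * x / real n * (e_mu \<mu> (- real n * x) / e_mu \<mu> (real n * x))))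
        + omega g (2 * \<alpha> * x\<^sup>2 / real n))"
proof (intro exI[of _ 16] conjI ballI allI impI)
  fix g n x
  assume g: "g \<in> CB" and n: "(n::nat) \<ge> 1" and x: "(x::real) \<ge> 0"
  obtain B where B: "\<And>t. t \<ge> 0 \<Longrightarrow> \<bar>g t\<bar> \<le> B"
    using g by (auto simp: CB_def bounded_iff)
  define S where "S = 1 / (real n)\<^sup>2 * x * (8 * x ^ 3 * \<alpha>\<^sup>2 + 4 * x * \<alpha> + real n)
                 + 2 * \<mu> * x / real n * (e_mu \<mu> (- real n * x) / e_mu \<mu> (real n * x))"
  define u where "u = x + 2 * \<alpha> * x\<^sup>2 / real n"
  define V where "V = x / real n + 4 * \<alpha> * x\<^sup>2 / (real n)\<^sup>2
                 + 2 * \<mu> * x / real n * (e_mu \<mu> (- real n * x) / e_mu \<mu> (real n * x))"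
  note moments = T_node_moments_sums[OF assms(2,1) x n, folded u_def V_def]
  have "S = V + 8 * x * x ^ 3 * \<alpha>\<^sup>2 / (real n)\<^sup>2"
    using n by (simp add: S_def V_def field_simps power2_eq_square)
  then have "\<bar>T_op \<alpha> \<mu> n g x - g u\<bar> \<le> 16 * omega2 g (1/2 * sqrt S)"
    unfolding T_op_eq
    using assms x n T_weight_nonneg[OF assms(2,1) x] e_mu_pos[OF assms(2), of "real n * x"]
    by (intro weighted_mean_deviation_le_omega2[OF _ moments(1) _ _ _ moments(2,3) _ B])
      (auto simp: T_node_def u_def bracket_mu_nonneg add_pos_nonneg)
  moreover have "\<bar>g u - g x\<bar> \<le> omega g (2 * \<alpha> * x\<^sup>2 / real n)"
    using assms x by (intro abs_diff_le_omega[OF B]) (auto simp: u_def)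
  ultimately show "\<bar>T_op \<alpha> \<mu> n g x - g x\<bar>
      \<le> 16 * omega2 g (1/2 * sqrt S) + omega g (2 * \<alpha> * x\<^sup>2 / real n)"
    by linarith
qed simp

end
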